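(* $\mathrm{GL}_3(\mathbb{F}_5)$ does not contain a subgroup isomorphic to $A_5\times V_4$.
   Context: $V_4\cong C_2\times C_2$ is the Klein four-group. *)

theory Defs
  imports "HOL-Analysis.Analysis" "HOL-Library.Numeral_Type"
    "HOL-Algebra.Sym_Groups" "HOL-Algebra.Elementary_Groups"
begin

text \<open>The finite field F_5 is represented by the type 5 (the integers modulo 5,
  a commutative ring from HOL-Library.Numeral_Type).\<close>

definition GL3_F5 :: "((5^3)^3) monoid" where
  "GL3_F5 = \<lparr> carrier = {A :: (5^3)^3. invertible A}, mult = (\<lambda>A B. A ** B), one = mat 1 \<rparr>"

definition V4 :: "(int \<times> int) monoid" where
  "V4 = integer_mod_group 2 \<times>\<times> integer_mod_group 2"

end

theory Submission
  imports Defs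
begin

text \<open>The subgroup \<open>V\<^sub>4 \<times> V\<^sub>4\<close> of \<open>A\<^sub>5 \<times> V\<^sub>4\<close> consists of 16 pairwise commuting elements
  squaring to the identity. In \<open>GL\<^sub>n(F\<^sub>5)\<close> such matrices are simultaneously diagonalisable
  because \<open>2\<close> is invertible: the products of the projections \<open>(1 \<plusminus> A)/2\<close> split \<open>F\<^sub>5\<^sup>n\<close>
  into joint eigenspaces, at most \<open>n\<close> of which are nonzero, and each matrix is determined by its
  signs on them. So there are at most \<open>2\<^sup>n\<close> of them, and \<open>2\<^sup>3 < 16\<close>.\<close>

lemma F5_cases: "(x::5) = 0 \<or> x = 1 \<or> x = 2 \<or> x = 3 \<or> x = 4"
proof (cases x)
  case (of_int z)
  then have "z = 0 \<or> z = 1 \<or> z = 2 \<or> z = 3 \<or> z = 4" by auto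
  then show ?thesis using of_int by auto
qed

lemma F5_mult_eq_0_iff: "(a::5) * b = 0 \<longleftrightarrow> a = 0 \<or> b = 0"
  using F5_cases[of a] F5_cases[of b] by auto

lemma F5_five_eq_0 [simp]: "(5::5) = 0"
  by simp

lemma F5_vector_smult_cancel:
  assumes "(c::5) *s w = d *s w" and "w \<noteq> 0"
  shows "c = d"
proof -
  obtain i where i: "w $ i \<noteq> 0" using assms(2) by (auto simp: vec_eq_iff)
  have "(c - d) * w $ i = 0" using assms(1) by (auto simp: vec_eq_iff algebra_simps)
  then show ?thesis using i by (simp add: F5_mult_eq_0_iff)
qed

lemma matrix_vector_scalar_commute:
  "(A::'a::comm_ring_1^'n^'m) *v (c *s x) = c *s (A *v x)"
  by (simp add: vec_eq_iff matrix_vector_mult_def sum_distrib_left algebra_simps)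

lemma matrix_vector_mult_sum:
  "(A::'a::comm_ring_1^'n^'m) *v sum f S = (\<Sum>s\<in>S. A *v f s)"
  using sum_comp_morphism[of "(*v) A" f S] by (simp add: matrix_vector_right_distrib comp_def)

lemma finite_bool_lists_length: "finite {bs :: bool list. length bs = n}"
  using finite_lists_length_eq[of "UNIV :: bool set" n] by simp

lemma sum_bool_lists_Suc:
  "(\<Sum>bs | length bs = Suc n. f bs) = (\<Sum>bs | length bs = n. f (True # bs) + f (False # bs))"
proof -
  let ?L = "{bs :: bool list. length bs = n}"
  have "{bs. length bs = Suc n} = Cons True ` ?L \<union> Cons False ` ?L"
    by (auto simp: length_Suc_conv image_iff)
  then have "(\<Sum>bs | length bs = Suc n. f bs) = sum f (Cons True ` ?L) + sum f (Cons False ` ?L)"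
    by (simp only:) (rule sum.union_disjoint, auto simp: finite_bool_lists_length)
  then show ?thesis by (simp add: sum.reindex sum.distrib)
qed

definition commuting_involution_matrices :: "('a::semiring_1^'n^'n) set \<Rightarrow> bool" where
  "commuting_involution_matrices E \<longleftrightarrow>
     (\<forall>A\<in>E. A ** A = mat 1) \<and> (\<forall>A\<in>E. \<forall>B\<in>E. A ** B = B ** A)"

lemma commuting_involution_matrices_subset:
  "commuting_involution_matrices E \<Longrightarrow> F \<subseteq> E \<Longrightarrow> commuting_involution_matrices F"
  unfolding commuting_involution_matrices_def by blast

definition pm_one :: "bool \<Rightarrow> 5" where
  "pm_one b = (if b then -1 else 1)"

text \<open>Since \<open>3 = 1/2\<close> in \<open>F\<^sub>5\<close>, for an involution \<open>A\<close> this is the projection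
  onto the \<open>pm_one b\<close>-eigenspace of \<open>A\<close> along the other one.\<close>

definition eigen_proj :: "5^'n^'n \<Rightarrow> bool \<Rightarrow> 5^'n \<Rightarrow> 5^'n" where
  "eigen_proj A b x = 3 *s (x + pm_one b *s (A *v x))"

lemma eigen_proj_add: "eigen_proj A b (x + y) = eigen_proj A b x + eigen_proj A b y"
  by (simp add: eigen_proj_def matrix_vector_right_distrib vec_eq_iff algebra_simps)

lemma eigen_proj_scale: "eigen_proj A b (c *s x) = c *s eigen_proj A b x"
  by (simp add: eigen_proj_def matrix_vector_scalar_commute vec_eq_iff algebra_simps)

lemma eigen_proj_zero [simp]: "eigen_proj A b 0 = 0"
  by (simp add: eigen_proj_def)

lemma eigen_proj_sum: "eigen_proj A b (sum f S) = (\<Sum>s\<in>S. eigen_proj A b (f s))"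
  using sum_comp_morphism[of "eigen_proj A b" f S] by (simp add: eigen_proj_add comp_def)

lemma eigen_proj_commute:
  "A ** B = B ** A \<Longrightarrow> B *v eigen_proj A b x = eigen_proj A b (B *v x)"
  by (simp add: eigen_proj_def matrix_vector_right_distrib matrix_vector_scalar_commute
      matrix_vector_mul_assoc)

lemma eigen_proj_eigenvector:
  assumes "A ** A = mat 1"
  shows "A *v eigen_proj A b x = pm_one b *s eigen_proj A b x"
proof -
  have "A *v eigen_proj A b x = 3 *s (A *v x + pm_one b *s x)"
    using assms by (simp add: eigen_proj_def matrix_vector_right_distrib
        matrix_vector_scalar_commute matrix_vector_mul_assoc)
  then show ?thesis
    by (simp add: eigen_proj_def vec_eq_iff algebra_simps pm_one_def)
qed

lemma eigen_proj_of_eigenvector: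
  "A *v w = pm_one c *s w \<Longrightarrow> eigen_proj A b w = (if b = c then w else 0)"
  by (auto simp: eigen_proj_def vec_eq_iff pm_one_def algebra_simps)

lemma eigen_proj_True_add_False: "eigen_proj A True x + eigen_proj A False x = x"
  by (simp add: eigen_proj_def vec_eq_iff pm_one_def algebra_simps)

fun joint_proj :: "(5^'n^'n) list \<Rightarrow> bool list \<Rightarrow> 5^'n \<Rightarrow> 5^'n" where
  "joint_proj (A # As) (b # bs) x = eigen_proj A b (joint_proj As bs x)"
| "joint_proj _ _ x = x"

definition joint_eigenvector :: "(5^'n^'n) list \<Rightarrow> bool list \<Rightarrow> 5^'n \<Rightarrow> bool" where
  "joint_eigenvector As bs w \<longleftrightarrow> list_all2 (\<lambda>A b. A *v w = pm_one b *s w) As bs"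

lemma joint_proj_add: "joint_proj As bs (x + y) = joint_proj As bs x + joint_proj As bs y"
  by (induction As bs x rule: joint_proj.induct) (simp_all add: eigen_proj_add)

lemma joint_proj_scale: "joint_proj As bs (c *s x) = c *s joint_proj As bs x"
  by (induction As bs x rule: joint_proj.induct) (simp_all add: eigen_proj_scale)

lemma joint_proj_zero [simp]: "joint_proj As bs 0 = 0"
  using joint_proj_scale[of As bs 0 0] by simp

lemma joint_proj_sum: "joint_proj As bs (sum f S) = (\<Sum>s\<in>S. joint_proj As bs (f s))"
  using sum_comp_morphism[of "joint_proj As bs" f S] by (simp add: joint_proj_add comp_def)

lemma joint_eigenvector_joint_proj:
  assumes "commuting_involution_matrices (set As)" and "length bs = length As"
  shows "joint_eigenvector As bs (joint_proj As bs x)"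
  using assms
proof (induction As bs rule: list_induct2')
  case (4 A As b bs)
  let ?w = "joint_proj As bs x"
  have inv: "A ** A = mat 1" and comm: "\<forall>B\<in>set As. A ** B = B ** A"
    using 4(2) unfolding commuting_involution_matrices_def by (meson list.set_intros)+
  have "joint_eigenvector As bs ?w"
    using 4 commuting_involution_matrices_subset[OF 4(2) set_subset_Cons] by simp
  then have "list_all2 (\<lambda>B c. B *v ?w = pm_one c *s ?w) As bs"
    by (simp add: joint_eigenvector_def)
  moreover have "B *v eigen_proj A b ?w = pm_one c *s eigen_proj A b ?w"
    if "B \<in> set As" and "B *v ?w = pm_one c *s ?w" for B c
    using eigen_proj_commute[of A B b ?w] comm that by (simp add: eigen_proj_scale)
  ultimately have "list_all2 (\<lambda>B c. B *v eigen_proj A b ?w = pm_one c *s eigen_proj A b ?w) As bs"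
    by (auto simp: list_all2_conv_all_nth)
  moreover have "A *v eigen_proj A b ?w = pm_one b *s eigen_proj A b ?w"
    using inv by (rule eigen_proj_eigenvector)
  ultimately show ?case by (simp add: joint_eigenvector_def)
qed (simp_all add: joint_eigenvector_def)

lemma joint_proj_joint_eigenvector:
  assumes "joint_eigenvector As cs w" and "length bs = length As"
  shows "joint_proj As bs w = (if bs = cs then w else 0)"
  using assms
proof (induction As bs arbitrary: cs rule: list_induct2')
  case (4 A As b bs)
  then obtain c cs' where cs: "cs = c # cs'" and "A *v w = pm_one c *s w"
    and "joint_eigenvector As cs' w"
    by (auto simp: joint_eigenvector_def list_all2_Cons1)
  with 4 show ?case
    by (simp add: eigen_proj_of_eigenvector)
qed (auto simp: joint_eigenvector_def)

lemma sum_joint_proj: "(\<Sum>bs | length bs = length As. joint_proj As bs x) = x"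
proof (induction As)
  case (Cons A As)
  have "(\<Sum>bs | length bs = length (A # As). joint_proj (A # As) bs x)
      = (\<Sum>bs | length bs = length As.
           eigen_proj A True (joint_proj As bs x) + eigen_proj A False (joint_proj As bs x))"
    by (simp add: sum_bool_lists_Suc)
  also have "\<dots> = eigen_proj A True x + eigen_proj A False x"
    using Cons by (simp add: sum.distrib flip: eigen_proj_sum)
  finally show ?case by (simp add: eigen_proj_True_add_False)
qed simp

lemma matrix_vector_mult_joint_proj_expansion:
  assumes "commuting_involution_matrices (set As)" and "i < length As"
  shows "As ! i *v x = (\<Sum>bs | length bs = length As. pm_one (bs ! i) *s joint_proj As bs x)"
proof -
  have "As ! i *v x = (\<Sum>bs | length bs = length As. As ! i *v joint_proj As bs x)"
    by (subst sum_joint_proj[of As x, symmetric]) (simp add: matrix_vector_mult_sum)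
  also have "\<dots> = (\<Sum>bs | length bs = length As. pm_one (bs ! i) *s joint_proj As bs x)"
  proof (rule sum.cong)
    fix bs :: "bool list" assume "bs \<in> {bs. length bs = length As}"
    then have "joint_eigenvector As bs (joint_proj As bs x)"
      using assms(1) by (simp add: joint_eigenvector_joint_proj)
    then show "As ! i *v joint_proj As bs x = pm_one (bs ! i) *s joint_proj As bs x"
      using assms(2) unfolding joint_eigenvector_def by (rule list_all2_nthD)
  qed simp
  finally show ?thesis .
qed

definition nonzero_joint_patterns :: "(5^'n^'n) list \<Rightarrow> bool list set" where
  "nonzero_joint_patterns As = {bs. length bs = length As \<and> (\<exists>x. joint_proj As bs x \<noteq> 0)}"

lemma finite_nonzero_joint_patterns: "finite (nonzero_joint_patterns As)"
  using finite_bool_lists_length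
  by (rule rev_finite_subset) (auto simp: nonzero_joint_patterns_def)

text \<open>Nonzero vectors from distinct joint eigenspaces are linearly independent, which over
  the finite field \<open>F\<^sub>5\<close> is expressed as an injection of \<open>F\<^sub>5\<^sup>S\<close> into \<open>F\<^sub>5\<^sup>n\<close>.\<close>

lemma card_nonzero_joint_patterns_le:
  fixes As :: "(5^'n^'n) list"
  assumes "commuting_involution_matrices (set As)"
  shows "card (nonzero_joint_patterns As) \<le> CARD('n)"
proof -
  define S where "S = nonzero_joint_patterns As"
  have "finite S"
    by (simp add: S_def finite_nonzero_joint_patterns)
  have "\<forall>bs\<in>S. \<exists>x. joint_proj As bs x \<noteq> 0"
    by (simp add: S_def nonzero_joint_patterns_def)
  then obtain v where v: "\<And>bs. bs \<in> S \<Longrightarrow> joint_proj As bs (v bs) \<noteq> 0"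
    by (metis bchoice)
  define w where "w bs = joint_proj As bs (v bs)" for bs
  have w_eigen: "joint_eigenvector As bs (w bs)" if "bs \<in> S" for bs
    using that assms by (simp add: S_def nonzero_joint_patterns_def w_def joint_eigenvector_joint_proj)
  have proj_w: "joint_proj As bs (w t) = (if t = bs then w t else 0)" if "bs \<in> S" and "t \<in> S" for bs t
    using joint_proj_joint_eigenvector[OF w_eigen[OF that(2)], of bs] that
    by (auto simp: S_def nonzero_joint_patterns_def)
  define f where "f c = (\<Sum>t\<in>S. c t *s w t)" for c :: "bool list \<Rightarrow> 5"
  have proj_f: "joint_proj As bs (f c) = c bs *s w bs" if "bs \<in> S" for bs c
  proof -
    have "joint_proj As bs (f c) = (\<Sum>t\<in>S. if t = bs then c t *s w t else 0)"
      using that by (auto simp: f_def joint_proj_sum joint_proj_scale proj_w intro!: sum.cong)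
    also have "\<dots> = c bs *s w bs"
      using that \<open>finite S\<close> by simp
    finally show ?thesis .
  qed
  have "inj_on f (S \<rightarrow>\<^sub>E UNIV)"
  proof (rule inj_onI)
    fix c d assume c: "c \<in> S \<rightarrow>\<^sub>E UNIV" and d: "d \<in> S \<rightarrow>\<^sub>E UNIV" and "f c = f d"
    have "c bs = d bs" if "bs \<in> S" for bs
    proof (rule F5_vector_smult_cancel)
      show "c bs *s w bs = d bs *s w bs"
        using proj_f[OF that, of c] proj_f[OF that, of d] \<open>f c = f d\<close> by simp
      show "w bs \<noteq> 0"
        using v[OF that] by (simp add: w_def)
    qed
    then show "c = d"
      using c d by (intro PiE_ext) auto
  qed
  then have "card (S \<rightarrow>\<^sub>E (UNIV :: 5 set)) \<le> card (UNIV :: (5^'n) set)"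
    by (rule card_inj_on_le) auto
  then have "(5::nat) ^ card S \<le> 5 ^ CARD('n)"
    using \<open>finite S\<close> by (simp add: card_PiE)
  then show ?thesis
    unfolding S_def by simp
qed

theorem card_commuting_involution_matrices_le:
  fixes E :: "(5^'n^'n) set"
  assumes "commuting_involution_matrices E"
  shows "card E \<le> 2 ^ CARD('n)"
proof -
  obtain As where As: "distinct As" "set As = E"
    using finite_distinct_list[of E] by auto
  have E: "commuting_involution_matrices (set As)"
    using assms As(2) by simp
  define S where "S = nonzero_joint_patterns As"
  have cS: "card S \<le> CARD('n)"
    using card_nonzero_joint_patterns_le[OF E] by (simp add: S_def)
  have "finite S"
    by (simp add: S_def finite_nonzero_joint_patterns)
  define code where "code i = restrict (\<lambda>bs. bs ! i) S" for i
  have "inj_on code {..<length As}"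
  proof (rule inj_onI)
    fix i j assume i: "i \<in> {..<length As}" and j: "j \<in> {..<length As}" and "code i = code j"
    then have ij: "bs ! i = bs ! j" if "bs \<in> S" for bs
      using that by (metis code_def restrict_apply')
    have "pm_one (bs ! i) *s joint_proj As bs x = pm_one (bs ! j) *s joint_proj As bs x"
      if "length bs = length As" for bs x
      using ij[of bs] that by (cases "bs \<in> S") (auto simp: S_def nonzero_joint_patterns_def)
    then have "As ! i *v x = As ! j *v x" for x
      using matrix_vector_mult_joint_proj_expansion[OF E, of i x]
        matrix_vector_mult_joint_proj_expansion[OF E, of j x] i j
      by (auto intro: sum.cong)
    then have "As ! i = As ! j"
      by (simp add: matrix_eq)
    then show "i = j"
      using As(1) i j by (simp add: nth_eq_iff_index_eq)
  qed
  moreover have "code ` {..<length As} \<subseteq> S \<rightarrow>\<^sub>E (UNIV :: bool set)"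
    by (auto simp: code_def)
  ultimately have "card {..<length As} \<le> card (S \<rightarrow>\<^sub>E (UNIV :: bool set))"
    using \<open>finite S\<close> by (intro card_inj_on_le) (auto simp: finite_PiE)
  also have "\<dots> = 2 ^ card S"
    using \<open>finite S\<close> by (simp add: card_PiE)
  also have "\<dots> \<le> 2 ^ CARD('n)"
    using cS by (simp add: power_increasing)
  finally show ?thesis
    using As by (simp add: distinct_card[symmetric])
qed

definition commuting_involution_set :: "('a, 'b) monoid_scheme \<Rightarrow> 'a set \<Rightarrow> bool" where
  "commuting_involution_set G K \<longleftrightarrow> K \<subseteq> carrier G \<and>
     (\<forall>x\<in>K. x \<otimes>\<^bsub>G\<^esub> x = \<one>\<^bsub>G\<^esub>) \<and> (\<forall>x\<in>K. \<forall>y\<in>K. x \<otimes>\<^bsub>G\<^esub> y = y \<otimes>\<^bsub>G\<^esub> x)"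

lemma commuting_involution_set_hom_image:
  assumes "group G" and "group H" and "h \<in> hom G H" and K: "commuting_involution_set G K"
  shows "commuting_involution_set H (h ` K)"
proof -
  have KG: "K \<subseteq> carrier G"
    using K by (simp add: commuting_involution_set_def)
  have "h x \<otimes>\<^bsub>H\<^esub> h x = \<one>\<^bsub>H\<^esub>" if "x \<in> K" for x
    using K KG that hom_mult[OF assms(3)] hom_one[OF assms(3,1,2)]
    by (metis commuting_involution_set_def subsetD)
  moreover have "h x \<otimes>\<^bsub>H\<^esub> h y = h y \<otimes>\<^bsub>H\<^esub> h x" if "x \<in> K" and "y \<in> K" for x y
    using K KG that hom_mult[OF assms(3)] by (metis commuting_involution_set_def subsetD)
  moreover have "h ` K \<subseteq> carrier H"
    using assms(3) KG by (auto simp: hom_def)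
  ultimately show ?thesis
    by (auto simp: commuting_involution_set_def)
qed

lemma group_GL3_F5: "group GL3_F5"
proof (rule groupI)
  show "x \<otimes>\<^bsub>GL3_F5\<^esub> y \<in> carrier GL3_F5"
    if "x \<in> carrier GL3_F5" and "y \<in> carrier GL3_F5" for x y
    using that by (simp add: GL3_F5_def invertible_mult)
  show "\<exists>y\<in>carrier GL3_F5. y \<otimes>\<^bsub>GL3_F5\<^esub> x = \<one>\<^bsub>GL3_F5\<^esub>" if "x \<in> carrier GL3_F5" for x
    using that unfolding GL3_F5_def invertible_def by auto
qed (auto simp: GL3_F5_def matrix_mul_assoc invertible_def)

definition klein_four_perms :: "(nat \<Rightarrow> nat) set" where
  "klein_four_perms =
     {id, Transposition.transpose 1 2 \<circ> Transposition.transpose 3 4,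
      Transposition.transpose 1 3 \<circ> Transposition.transpose 2 4,
      Transposition.transpose 1 4 \<circ> Transposition.transpose 2 3}"

lemma klein_four_perms_alt_group: "klein_four_perms \<subseteq> carrier (alt_group 5)"
  by (auto simp: klein_four_perms_def alt_group_def sym_group_def evenperm_comp
      permutation_swap_id evenperm_swap intro!: permutes_compose permutes_swap_id)

lemma klein_four_perms_involution: "p \<in> klein_four_perms \<Longrightarrow> p \<circ> p = id"
  by (auto simp: klein_four_perms_def fun_eq_iff Transposition.transpose_def)

lemma klein_four_perms_commute: "p \<in> klein_four_perms \<Longrightarrow> q \<in> klein_four_perms \<Longrightarrow> p \<circ> q = q \<circ> p"
  by (auto simp: klein_four_perms_def fun_eq_iff Transposition.transpose_def)

lemma card_klein_four_perms: "card klein_four_perms = 4"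
proof -
  have "inj_on (\<lambda>p. p 1) klein_four_perms"
    by (rule inj_onI) (auto simp: klein_four_perms_def Transposition.transpose_def)
  then have "card klein_four_perms = card ((\<lambda>p. p 1) ` klein_four_perms)"
    by (rule card_image[symmetric])
  also have "(\<lambda>p. p 1) ` klein_four_perms = {1, 2, 3, 4}"
    by (auto simp: klein_four_perms_def Transposition.transpose_def)
  finally show ?thesis by simp
qed

lemma commuting_involution_set_alt5_V4:
  "commuting_involution_set (alt_group 5 \<times>\<times> V4) (klein_four_perms \<times> carrier V4)"
  using klein_four_perms_alt_group klein_four_perms_involution klein_four_perms_commute
  by (auto simp: commuting_involution_set_def V4_def mult_DirProd' alt_group_def sym_group_def
      ac_simps)

lemma card_klein_four_perms_V4: "card (klein_four_perms \<times> carrier V4) = 16"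
  by (simp add: card_cartesian_product card_klein_four_perms carrier_integer_mod_group V4_def)

theorem lemma3p18:
  shows "\<not> (\<exists>H. subgroup H GL3_F5 \<and> (GL3_F5\<lparr>carrier := H\<rparr>) \<cong> (alt_group 5 \<times>\<times> V4))"
proof
  assume "\<exists>H. subgroup H GL3_F5 \<and> (GL3_F5\<lparr>carrier := H\<rparr>) \<cong> (alt_group 5 \<times>\<times> V4)"
  then obtain H where sub: "subgroup H GL3_F5"
    and iso: "(GL3_F5\<lparr>carrier := H\<rparr>) \<cong> (alt_group 5 \<times>\<times> V4)"
    by blast
  let ?G = "alt_group 5 \<times>\<times> V4" and ?K = "klein_four_perms \<times> carrier V4"
  have "group (GL3_F5\<lparr>carrier := H\<rparr>)"
    using subgroup.subgroup_is_group[OF sub group_GL3_F5] .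
  moreover have "group ?G"
    unfolding V4_def by (intro DirProd_group alt_group_is_group group_integer_mod_group)
  ultimately obtain h where h: "h \<in> iso ?G (GL3_F5\<lparr>carrier := H\<rparr>)"
    using group.iso_sym[OF _ iso] unfolding is_iso_def by blast
  then have "h \<in> hom ?G (GL3_F5\<lparr>carrier := H\<rparr>)"
    by (simp add: iso_iff)
  with \<open>group ?G\<close> \<open>group (GL3_F5\<lparr>carrier := H\<rparr>)\<close>
  have "commuting_involution_set (GL3_F5\<lparr>carrier := H\<rparr>) (h ` ?K)"
    using commuting_involution_set_alt5_V4 by (rule commuting_involution_set_hom_image)
  then have "card (h ` ?K) \<le> 2 ^ CARD(3)"
    by (intro card_commuting_involution_matrices_le)
      (simp add: commuting_involution_set_def commuting_involution_matrices_def GL3_F5_def)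
  moreover have "card (h ` ?K) = 16"
    using h commuting_involution_set_alt5_V4 card_klein_four_perms_V4
    by (metis card_image commuting_involution_set_def inj_on_subset iso_iff)
  ultimately show False
    by simp
qed

end
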